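(* Let $X_1,X_2,\dots$ be iid real random variables with common continuous distribution function $F$. Then for all integers $1\le j<k$ and all $y_1,y_2\in\mathbb{R}$, \[ \Pr(X_j\le y_1,X_k\le y_2\mid X_j\text{ and }X_k\text{ are records}) =\begin{cases} \frac{F^j(y_1)}{k-j}\left(kF^{k-j}(y_2)-jF^{k-j}(y_1)\right), & \text{if } F(y_1)<F(y_2),\\[2pt] F^k(y_2)=\Pr(X_k\le y_2\mid X_k\text{ is a record}), & \text{if } F(y_2)\le F(y_1). \end{cases} \]
   Context: $X_m$ is a record if $X_m>\max(X_1,\dots,X_{m-1})$; $X_1$ is always a record. *)

theory Defs
  imports "HOL-Probability.Probability"
begin

text \<open>Sequence indexed from 1. X m is a record at outcome w if m \<ge> 1 and
  X m w > max(X 1 w, ..., X (m-1) w); X 1 is always a record.\<close>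
definition is_record :: "(nat \<Rightarrow> 'a \<Rightarrow> real) \<Rightarrow> nat \<Rightarrow> 'a \<Rightarrow> bool" where
  "is_record X m w \<longleftrightarrow> 1 \<le> m \<and> (\<forall>i\<in>{1..<m}. X i w < X m w)"

end

theory Submission
  imports Defs
begin

text \<open>
  Since the common distribution function \<open>F\<close> is continuous, \<open>F(X\<^sub>i)\<close> is uniform on \<open>[0,1]\<close>
  (probability integral transform); in particular ties and level sets of \<open>F\<close> are null.
  Given \<open>X\<^sub>j = u\<close> and \<open>X\<^sub>k = v\<close>, both are records iff \<open>u < v\<close>, \<open>X\<^sub>i < u\<close> for \<open>i < j\<close> and
  \<open>X\<^sub>i < v\<close> for \<open>j < i < k\<close>, so by independence
  \<open>P(X\<^sub>j \<in> A\<^sub>1, X\<^sub>k \<in> A\<^sub>2, both records) = \<integral>\<^bsub>A\<^sub>2\<^esub> \<integral>\<^bsub>A\<^sub>1 \<inter> {..<v}\<^esub> F(u)\<^bsup>j-1\<^esup> F(v)\<^bsup>k-j-1\<^esup> dF(u) dF(v)\<close>,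
  which the substitution \<open>t = F(\<cdot>)\<close> turns into integrals of powers over \<open>[0,1]\<close>.
  Taking \<open>A\<^sub>1 = A\<^sub>2 = \<real>\<close> gives \<open>P(both records) = 1/(jk)\<close>, and since \<open>X\<^sub>1\<close> is always a
  record, \<open>j = 1\<close> gives \<open>P(X\<^sub>k \<le> y, X\<^sub>k record) = F(y)\<^sup>k/k\<close> and \<open>P(X\<^sub>k record) = 1/k\<close>.
\<close>

lemma nn_integral_power_atLeastAtMost:
  assumes "0 \<le> (a::real)"
  shows "(\<integral>\<^sup>+ t. indicator {0..a} t * ennreal (t ^ m) \<partial>lborel) = ennreal (a ^ Suc m / Suc m)"
proof -
  have "((\<lambda>t. t ^ m) has_integral (a ^ Suc m / Suc m - 0 ^ Suc m / Suc m)) {0..a}"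
  proof (rule fundamental_theorem_of_calculus[OF assms])
    fix x :: real
    have "((\<lambda>t. t ^ Suc m / Suc m) has_real_derivative x ^ m) (at x within {0..a})"
      by (auto intro!: derivative_eq_intros simp del: of_nat_Suc) (cases m, simp_all add: field_simps)
    then show "((\<lambda>t. t ^ Suc m / Suc m) has_vector_derivative x ^ m) (at x within {0..a})"
      by (simp add: has_real_derivative_iff_has_vector_derivative)
  qed
  then have "((\<lambda>t. t ^ m) has_integral (a ^ Suc m / Suc m)) {0..a}" by simp
  from nn_integral_has_integral_lebesgue'[OF _ this] show ?thesis
    by (simp add: mult.commute)
qed

locale continuous_real_distribution = real_distribution +
  assumes continuous_cdf: "continuous_on UNIV (cdf M)"
begin

lemma borel_measurable_cdf [measurable]: "cdf M \<in> borel_measurable borel"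
  by (rule borel_measurable_continuous_onI[OF continuous_cdf])

lemma measure_cdf_sublevel: "measure M {u. cdf M u \<le> t} = max 0 (min 1 t)"
proof -
  let ?S = "{u. cdf M u \<le> t}"
  consider "?S = {}" | "?S = UNIV" | a b where "cdf M a \<le> t" "t < cdf M b"
    by (metis (mono_tags) UNIV_eq_I empty_Collect_eq mem_Collect_eq not_le)
  then show ?thesis
  proof cases
    case 1
    have "t \<le> 0"
    proof (rule ccontr)
      assume "\<not> t \<le> 0"
      then have "eventually (\<lambda>x. cdf M x < t) at_bot"
        by (intro order_tendstoD(2)[OF cdf_lim_at_bot]) simp
      then obtain x where "cdf M x < t" by (metis eventually_at_bot_linorder order_refl)
      with 1 show False by (auto dest: less_imp_le)
    qed
    with 1 show ?thesis by simp
  next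
    case 2
    have "1 \<le> t"
      using cdf_lim_at_top_prob by (rule tendsto_upperbound) (use 2 in \<open>auto intro: always_eventually\<close>)
    with 2 show ?thesis using prob_space by simp
  next
    case 3
    have "a \<le> b"
      using 3 cdf_nondecreasing[of b a] by (cases "a \<le> b") auto
    with 3 obtain x where "cdf M x = t"
      using IVT'[of "cdf M" a t b] continuous_cdf by (auto intro: continuous_on_subset)
    have "bdd_above ?S"
    proof (rule bdd_aboveI)
      fix u assume "u \<in> ?S"
      then show "u \<le> b"
        using 3 cdf_nondecreasing[of b u] by (cases "u \<le> b") auto
    qed
    moreover have "closed ?S"
      by (rule closed_Collect_le) (use continuous_cdf in \<open>auto intro: continuous_on_const\<close>)
    ultimately have "Sup ?S \<in> ?S"
      using 3 by (intro closed_contains_Sup) auto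
    then have sublevel: "?S = {..Sup ?S}"
      using \<open>bdd_above ?S\<close> cdf_nondecreasing by (auto intro: cSup_upper order.trans)
    then have "cdf M (Sup ?S) = t"
      using \<open>cdf M x = t\<close> \<open>Sup ?S \<in> ?S\<close> cdf_nondecreasing by (metis atMost_iff eq_iff mem_Collect_eq)
    moreover have "0 \<le> t" "t < 1"
      using 3 cdf_nonneg[of a] cdf_bounded_prob[of b] by auto
    ultimately show ?thesis
      using sublevel by (simp add: cdf_def2)
  qed
qed

lemma distr_cdf_uniform: "distr M borel (cdf M) = density lborel (indicator {0..1})"
proof -
  have "distributed M lborel (cdf M) (\<lambda>x. indicator {0..1::real} x / measure lborel {0..1::real})"
  proof (rule uniform_distrI_borel)
    fix a :: real
    have "{0..1} \<inter> {..a} = {0..min 1 a}" by auto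
    then have "emeasure lborel ({0..1} \<inter> {..a}) = ennreal (max 0 (min 1 a))"
      by (cases "0 \<le> min 1 a") (auto simp: max_def)
    then show "emeasure M {x \<in> space M. cdf M x \<le> a} = emeasure lborel ({0..1} \<inter> {..a}) / ennreal 1"
      using measure_cdf_sublevel[of a] by (simp add: emeasure_eq_measure divide_ennreal_def)
  qed auto
  then have "distr M lborel (cdf M) = density lborel (indicator {0..1})"
    by (simp add: distributed_distr_eq_density ennreal_indicator)
  then show ?thesis
    by (metis distr_cong sets_lborel)
qed

lemma AE_cdf_neq: "AE u in M. cdf M u \<noteq> c"
proof -
  have "AE t in density lborel (indicator {0..1::real}). t \<noteq> c"
    using AE_lborel_singleton[of c] by (subst AE_density) (auto elim: AE_mp)
  then show ?thesis
    by (subst (asm) distr_cdf_uniform[symmetric]) (simp add: AE_distr_iff)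
qed

lemma nn_integral_cdf_comp:
  assumes [measurable]: "h \<in> borel_measurable borel"
  shows "(\<integral>\<^sup>+ u. h (cdf M u) \<partial>M) = (\<integral>\<^sup>+ t. indicator {0..1} t * h t \<partial>lborel)"
proof -
  have "(\<integral>\<^sup>+ u. h (cdf M u) \<partial>M) = (\<integral>\<^sup>+ t. h t \<partial>distr M borel (cdf M))"
    by (simp add: nn_integral_distr)
  then show ?thesis
    by (simp add: distr_cdf_uniform nn_integral_density)
qed

lemma nn_integral_cdf_power: "(\<integral>\<^sup>+ u. ennreal (cdf M u ^ m) \<partial>M) = ennreal (1 / Suc m)"
  using nn_integral_cdf_comp[of "\<lambda>t. ennreal (t ^ m)"] nn_integral_power_atLeastAtMost[of 1 m]
  by simp

lemma nn_integral_cdf_power_atMost: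
  "(\<integral>\<^sup>+ u. indicator {..c} u * ennreal (cdf M u ^ m) \<partial>M) = ennreal (cdf M c ^ Suc m / Suc m)"
proof -
  \<comment> \<open>\<open>{..c}\<close> and \<open>{u. cdf M u \<le> cdf M c}\<close> differ only inside a level set of \<open>cdf M\<close>\<close>
  have "AE u in M. indicator {..c} u = (indicator {..cdf M c} (cdf M u) :: ennreal)"
    using AE_cdf_neq[of "cdf M c"]
  proof eventually_elim
    case (elim u)
    then have "u \<le> c \<longleftrightarrow> cdf M u \<le> cdf M c"
      using cdf_nondecreasing[of u c] cdf_nondecreasing[of c u] by (cases "u \<le> c") auto
    then show ?case by (simp split: split_indicator)
  qed
  then have "(\<integral>\<^sup>+ u. indicator {..c} u * ennreal (cdf M u ^ m) \<partial>M)
      = (\<integral>\<^sup>+ u. indicator {..cdf M c} (cdf M u) * ennreal (cdf M u ^ m) \<partial>M)"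
    by (intro nn_integral_cong_AE) auto
  also have "\<dots> = (\<integral>\<^sup>+ t. indicator {0..cdf M c} t * ennreal (t ^ m) \<partial>lborel)"
    using cdf_bounded_prob[of c]
    by (subst nn_integral_cdf_comp) (auto intro!: nn_integral_cong split: split_indicator)
  finally show ?thesis
    using cdf_nonneg by (simp add: nn_integral_power_atLeastAtMost)
qed

lemma nn_integral_cdf_power_lessThan:
  "(\<integral>\<^sup>+ u. indicator {..<c} u * ennreal (cdf M u ^ m) \<partial>M) = ennreal (cdf M c ^ Suc m / Suc m)"
proof -
  have "AE u in M. indicator {..<c} u = (indicator {..c} u :: ennreal)"
    using AE_cdf_neq[of "cdf M c"] by eventually_elim (auto split: split_indicator)
  then show ?thesis
    by (subst nn_integral_cdf_power_atMost[symmetric]) (auto intro!: nn_integral_cong_AE)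
qed

lemma emeasure_lessThan_eq_cdf: "emeasure M {..<c} = ennreal (cdf M c)"
  using nn_integral_cdf_power_lessThan[of c 0] by simp

lemma nn_integral_cdf_power_greaterThanAtMost:
  assumes "a \<le> b"
  shows "(\<integral>\<^sup>+ u. indicator {a<..b} u * ennreal (cdf M u ^ m) \<partial>M)
    = ennreal ((cdf M b ^ Suc m - cdf M a ^ Suc m) / Suc m)"
proof -
  let ?I = "\<integral>\<^sup>+ u. indicator {a<..b} u * ennreal (cdf M u ^ m) \<partial>M"
  have "ennreal (cdf M b ^ Suc m / Suc m) = (\<integral>\<^sup>+ u. indicator {..a} u * ennreal (cdf M u ^ m)
      + indicator {a<..b} u * ennreal (cdf M u ^ m) \<partial>M)"
    unfolding nn_integral_cdf_power_atMost[symmetric]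
    using assms by (intro nn_integral_cong) (auto split: split_indicator)
  also have "\<dots> = ennreal (cdf M a ^ Suc m / Suc m) + ?I"
    by (subst nn_integral_add) (auto simp: nn_integral_cdf_power_atMost)
  finally have "?I = ennreal (cdf M b ^ Suc m / Suc m) - ennreal (cdf M a ^ Suc m / Suc m)"
    by simp
  then show ?thesis
    using cdf_nonneg[of a] by (simp add: ennreal_minus diff_divide_distrib)
qed

lemma nn_integral_cdf_power_atMost_lessThan:
  "(\<integral>\<^sup>+ u. indicator {..y} u * indicator {..<v} u * ennreal (cdf M u ^ p) \<partial>M)
    = ennreal (cdf M (min y v) ^ Suc p / Suc p)"
proof (cases "v \<le> y")
  case True
  then have "(\<integral>\<^sup>+ u. indicator {..y} u * indicator {..<v} u * ennreal (cdf M u ^ p) \<partial>M)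
      = (\<integral>\<^sup>+ u. indicator {..<v} u * ennreal (cdf M u ^ p) \<partial>M)"
    by (intro nn_integral_cong) (simp split: split_indicator)
  with True show ?thesis
    by (simp add: nn_integral_cdf_power_lessThan min_absorb2)
next
  case False
  then have "(\<integral>\<^sup>+ u. indicator {..y} u * indicator {..<v} u * ennreal (cdf M u ^ p) \<partial>M)
      = (\<integral>\<^sup>+ u. indicator {..y} u * ennreal (cdf M u ^ p) \<partial>M)"
    by (intro nn_integral_cong) (simp split: split_indicator)
  with False show ?thesis
    by (simp add: nn_integral_cdf_power_atMost min_absorb1)
qed

lemma nn_integral_record_pair:
  assumes [measurable]: "A \<in> sets borel"
  shows "(\<integral>\<^sup>+ v. \<integral>\<^sup>+ u. indicator A v * indicator {..<v} u
      * ennreal (cdf M u ^ p) * ennreal (cdf M v ^ q) \<partial>M \<partial>M)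
    = ennreal (1 / Suc p) * (\<integral>\<^sup>+ v. indicator A v * ennreal (cdf M v ^ Suc (p + q)) \<partial>M)"
proof -
  have "(\<integral>\<^sup>+ u. indicator A v * indicator {..<v} u * ennreal (cdf M u ^ p) * ennreal (cdf M v ^ q) \<partial>M)
      = ennreal (1 / Suc p) * (indicator A v * ennreal (cdf M v ^ Suc (p + q)))" for v
  proof -
    have "(\<integral>\<^sup>+ u. indicator A v * indicator {..<v} u * ennreal (cdf M u ^ p) * ennreal (cdf M v ^ q) \<partial>M)
        = indicator A v * ennreal (cdf M v ^ q) * (\<integral>\<^sup>+ u. indicator {..<v} u * ennreal (cdf M u ^ p) \<partial>M)"
      by (subst nn_integral_cmult[symmetric]) (auto intro!: nn_integral_cong simp: ac_simps)
    also have "\<dots> = indicator A v * (ennreal (cdf M v ^ q) * ennreal (cdf M v ^ Suc p / Suc p))"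
      by (simp add: nn_integral_cdf_power_lessThan mult.assoc)
    also have "ennreal (cdf M v ^ q) * ennreal (cdf M v ^ Suc p / Suc p)
        = ennreal (1 / Suc p) * ennreal (cdf M v ^ Suc (p + q))"
      using cdf_nonneg[of v] by (simp add: ennreal_mult[symmetric] power_add field_simps)
    finally show ?thesis
      by (simp add: ac_simps)
  qed
  then show ?thesis
    by (simp add: nn_integral_cmult)
qed

text \<open>The second summand vanishes when \<open>y2 \<le> y1\<close>.\<close>

lemma nn_integral_record_pair_atMost:
  "(\<integral>\<^sup>+ v. \<integral>\<^sup>+ u. indicator {..y1} u * indicator {..y2} v * indicator {..<v} u
      * ennreal (cdf M u ^ p) * ennreal (cdf M v ^ q) \<partial>M \<partial>M)
    = ennreal (1 / Suc p) * ennreal (cdf M (min y1 y2) ^ Suc (Suc (p + q)) / Suc (Suc (p + q)))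
      + ennreal (cdf M y1 ^ Suc p / Suc p)
        * ennreal ((cdf M (max y1 y2) ^ Suc q - cdf M y1 ^ Suc q) / Suc q)"
proof -
  have "(\<integral>\<^sup>+ u. indicator {..y1} u * indicator {..y2} v * indicator {..<v} u
        * ennreal (cdf M u ^ p) * ennreal (cdf M v ^ q) \<partial>M)
      = ennreal (1 / Suc p) * (indicator {..min y1 y2} v * ennreal (cdf M v ^ Suc (p + q)))
        + ennreal (cdf M y1 ^ Suc p / Suc p) * (indicator {y1<..max y1 y2} v * ennreal (cdf M v ^ q))"
    for v
  proof -
    have "(\<integral>\<^sup>+ u. indicator {..y1} u * indicator {..y2} v * indicator {..<v} u
          * ennreal (cdf M u ^ p) * ennreal (cdf M v ^ q) \<partial>M)
        = indicator {..y2} v * ennreal (cdf M v ^ q)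
          * (\<integral>\<^sup>+ u. indicator {..y1} u * indicator {..<v} u * ennreal (cdf M u ^ p) \<partial>M)"
      by (subst nn_integral_cmult[symmetric]) (auto intro!: nn_integral_cong simp: ac_simps)
    also have "\<dots> = indicator {..y2} v * ennreal (cdf M v ^ q) * ennreal (cdf M (min y1 v) ^ Suc p / Suc p)"
      by (simp only: nn_integral_cdf_power_atMost_lessThan)
    also have "\<dots> = ennreal (1 / Suc p) * (indicator {..min y1 y2} v * ennreal (cdf M v ^ Suc (p + q)))
        + ennreal (cdf M y1 ^ Suc p / Suc p) * (indicator {y1<..max y1 y2} v * ennreal (cdf M v ^ q))"
      using cdf_nonneg[of v]
      by (auto simp: ennreal_mult[symmetric] power_add field_simps split: split_indicator)
    finally show ?thesis .
  qed
  then have "(\<integral>\<^sup>+ v. \<integral>\<^sup>+ u. indicator {..y1} u * indicator {..y2} v * indicator {..<v} u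
      * ennreal (cdf M u ^ p) * ennreal (cdf M v ^ q) \<partial>M \<partial>M)
    = ennreal (1 / Suc p) * (\<integral>\<^sup>+ v. indicator {..min y1 y2} v * ennreal (cdf M v ^ Suc (p + q)) \<partial>M)
      + ennreal (cdf M y1 ^ Suc p / Suc p) * (\<integral>\<^sup>+ v. indicator {y1<..max y1 y2} v * ennreal (cdf M v ^ q) \<partial>M)"
    by (simp add: nn_integral_add nn_integral_cmult)
  then show ?thesis
    by (simp only: nn_integral_cdf_power_atMost nn_integral_cdf_power_greaterThanAtMost[OF max.cobounded1])
qed

end

lemma records_pair_iff:
  fixes y :: "nat \<Rightarrow> 'a::linorder"
  assumes "1 \<le> j" "j < k"
  shows "(\<forall>i\<in>{1..<j}. y i < y j) \<and> (\<forall>i\<in>{1..<k}. y i < y k) \<longleftrightarrow>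
    y j < y k \<and> (\<forall>i\<in>{1..<j}. y i < y j) \<and> (\<forall>i\<in>{j<..<k}. y i < y k)"
  using assms by (auto, metis atLeastLessThan_iff greaterThanLessThan_iff less_trans linorder_neqE_nat)

lemma (in product_sigma_finite) product_nn_integral_insert2_rev:
  assumes "finite I" "j \<notin> I" "k \<notin> insert j I"
    and [measurable]: "f \<in> borel_measurable (PiM (insert k (insert j I)) M)"
  shows "integral\<^sup>N (PiM (insert k (insert j I)) M) f
    = (\<integral>\<^sup>+ v. \<integral>\<^sup>+ u. \<integral>\<^sup>+ x. f (x(j := u, k := v)) \<partial>PiM I M \<partial>M j \<partial>M k)"
proof -
  have "integral\<^sup>N (PiM (insert k (insert j I)) M) f
      = (\<integral>\<^sup>+ v. \<integral>\<^sup>+ x. f (x(k := v)) \<partial>PiM (insert j I) M \<partial>M k)"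
    using assms(1,3) by (intro product_nn_integral_insert_rev) auto
  also have "\<dots> = (\<integral>\<^sup>+ v. \<integral>\<^sup>+ u. \<integral>\<^sup>+ x. f (x(j := u, k := v)) \<partial>PiM I M \<partial>M j \<partial>M k)"
    using assms(1-3) by (intro nn_integral_cong product_nn_integral_insert_rev) measurable
  finally show ?thesis .
qed

lemma emeasure_PiM_PiE_two_blocks:
  assumes "sigma_finite_measure \<mu>" and "finite A" "finite B" "A \<inter> B = {}"
    and "S \<in> sets \<mu>" "T \<in> sets \<mu>"
  shows "emeasure (PiM (A \<union> B) (\<lambda>_. \<mu>)) (Pi\<^sub>E (A \<union> B) (\<lambda>i. if i \<in> A then S else T))
    = emeasure \<mu> S ^ card A * emeasure \<mu> T ^ card B"
proof -
  interpret product_sigma_finite "\<lambda>_. \<mu>"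
    unfolding product_sigma_finite_def using assms(1) by blast
  have "emeasure (PiM (A \<union> B) (\<lambda>_. \<mu>)) (Pi\<^sub>E (A \<union> B) (\<lambda>i. if i \<in> A then S else T))
      = (\<Prod>i\<in>A \<union> B. emeasure \<mu> (if i \<in> A then S else T))"
    using assms(2,3,5,6) by (intro emeasure_PiM) auto
  also have "\<dots> = (\<Prod>i\<in>A. emeasure \<mu> S) * (\<Prod>i\<in>B. emeasure \<mu> T)"
  proof -
    have "(\<Prod>i\<in>B. emeasure \<mu> (if i \<in> A then S else T)) = (\<Prod>i\<in>B. emeasure \<mu> T)"
      using assms(4) by (intro prod.cong) (auto split: if_split)
    then show ?thesis
      using assms(2-4) by (simp add: prod.union_disjoint)
  qed
  finally show ?thesis
    by simp
qed

lemma nn_integral_two_records_section: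
  fixes \<mu> :: "real measure"
  assumes "real_distribution \<mu>" and "1 \<le> j" "j < k"
  shows "(\<integral>\<^sup>+ x. indicator {x \<in> space (PiM {1..k} (\<lambda>_. \<mu>)). x j \<in> A1 \<and> x k \<in> A2 \<and>
         (\<forall>i\<in>{1..<j}. x i < x j) \<and> (\<forall>i\<in>{1..<k}. x i < x k)} (x(j := u, k := v))
       \<partial>PiM ({1..<j} \<union> {j<..<k}) (\<lambda>_. \<mu>))
    = indicator A1 u * indicator A2 v * indicator {..<v} u *
      emeasure \<mu> {..<u} ^ (j - 1) * emeasure \<mu> {..<v} ^ (k - j - 1)"
    (is "(\<integral>\<^sup>+ x. indicator ?E _ \<partial>PiM ?I _) = _")
proof -
  have "prob_space \<mu>" and sets_\<mu>: "sets \<mu> = sets borel"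
    using assms(1) by (simp_all add: real_distribution_def real_distribution_axioms_def)
  define B where "B = (\<lambda>i. if i \<in> {1..<j} then {..<u} else {..<v})"
  have slice: "indicator ?E (x(j := u, k := v))
      = indicator A1 u * indicator A2 v * indicator {..<v} u * (indicator (Pi\<^sub>E ?I B) x :: ennreal)"
    if x: "x \<in> space (PiM ?I (\<lambda>_. \<mu>))" for x
  proof -
    define y where "y = x(j := u, k := v)"
    have y_jk: "y j = u" "y k = v"
      using assms(3) by (simp_all add: y_def)
    have "space \<mu> = UNIV"
      using sets_eq_imp_space_eq[OF sets_\<mu>] by simp
    moreover have "{1..k} = insert k (insert j ?I)"
      using assms(2,3) by auto
    ultimately have "y \<in> space (PiM {1..k} (\<lambda>_. \<mu>))"
      using x by (auto simp: y_def space_PiM PiE_iff extensional_def)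
    moreover have "x \<in> Pi\<^sub>E ?I B \<longleftrightarrow> (\<forall>i\<in>{1..<j}. y i < u) \<and> (\<forall>i\<in>{j<..<k}. y i < v)"
      using x assms(3) by (auto simp: y_def space_PiM PiE_iff B_def)
    ultimately have "y \<in> ?E \<longleftrightarrow> u \<in> A1 \<and> v \<in> A2 \<and> u < v \<and> x \<in> Pi\<^sub>E ?I B"
      using records_pair_iff[OF assms(2,3), of y] by (simp add: y_jk)
    then show ?thesis
      by (simp add: y_def indicator_def)
  qed
  have "(\<integral>\<^sup>+ x. indicator ?E (x(j := u, k := v)) \<partial>PiM ?I (\<lambda>_. \<mu>))
      = (\<integral>\<^sup>+ x. indicator A1 u * indicator A2 v * indicator {..<v} u
          * indicator (Pi\<^sub>E ?I B) x \<partial>PiM ?I (\<lambda>_. \<mu>))"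
    by (intro nn_integral_cong slice)
  also have "\<dots> = indicator A1 u * indicator A2 v * indicator {..<v} u * emeasure (PiM ?I (\<lambda>_. \<mu>)) (Pi\<^sub>E ?I B)"
    using sets_\<mu> by (intro nn_integral_cmult_indicator sets_PiM_I_finite) (auto simp: B_def)
  also have "emeasure (PiM ?I (\<lambda>_. \<mu>)) (Pi\<^sub>E ?I B) = emeasure \<mu> {..<u} ^ (j - 1) * emeasure \<mu> {..<v} ^ (k - j - 1)"
    unfolding B_def using prob_space_imp_sigma_finite[OF \<open>prob_space \<mu>\<close>] sets_\<mu>
    by (subst emeasure_PiM_PiE_two_blocks) auto
  finally show ?thesis
    by (simp only: mult.assoc)
qed

lemma emeasure_PiM_two_records:
  fixes \<mu> :: "real measure"
  assumes "real_distribution \<mu>"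
    and "1 \<le> j" "j < k" and [measurable]: "A1 \<in> sets borel" "A2 \<in> sets borel"
  shows "emeasure (PiM {1..k} (\<lambda>_. \<mu>))
      {x \<in> space (PiM {1..k} (\<lambda>_. \<mu>)). x j \<in> A1 \<and> x k \<in> A2 \<and>
         (\<forall>i\<in>{1..<j}. x i < x j) \<and> (\<forall>i\<in>{1..<k}. x i < x k)}
    = (\<integral>\<^sup>+ v. \<integral>\<^sup>+ u. indicator A1 u * indicator A2 v * indicator {..<v} u *
          emeasure \<mu> {..<u} ^ (j - 1) * emeasure \<mu> {..<v} ^ (k - j - 1) \<partial>\<mu> \<partial>\<mu>)"
    (is "emeasure ?P ?E = _")
proof -
  have [measurable_cong]: "sets \<mu> = sets borel" and "prob_space \<mu>"
    using assms(1) by (simp_all add: real_distribution_def real_distribution_axioms_def)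
  then interpret product_sigma_finite "\<lambda>_::nat. \<mu>"
    unfolding product_sigma_finite_def using prob_space_imp_sigma_finite by blast
  define I where "I = {1..<j} \<union> {j<..<k}"
  have I: "finite I" "j \<notin> I" "k \<notin> insert j I" and I_k: "{1..k} = insert k (insert j I)"
    using assms(2,3) by (auto simp: I_def)
  let ?Q = "PiM (insert k (insert j I)) (\<lambda>_. \<mu>)"
  have P_Q: "?P = ?Q"
    unfolding I_k ..
  have [measurable]: "j \<in> {1..k}" "k \<in> {1..k}"
    "i \<in> {1..<j} \<Longrightarrow> i \<in> {1..k}" "i \<in> {1..<k} \<Longrightarrow> i \<in> {1..k}" for i
    using assms(2,3) by auto
  have E_meas [measurable]: "?E \<in> sets ?Q"
    unfolding I_k[symmetric] by measurable
  have "emeasure ?P ?E = emeasure ?Q ?E"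
    by (simp only: P_Q)
  also have "\<dots> = (\<integral>\<^sup>+ x. indicator ?E x \<partial>?Q)"
    using E_meas by simp
  also have "\<dots> = (\<integral>\<^sup>+ v. \<integral>\<^sup>+ u. \<integral>\<^sup>+ x. indicator ?E (x(j := u, k := v))
      \<partial>PiM I (\<lambda>_. \<mu>) \<partial>\<mu> \<partial>\<mu>)"
    using I by (intro product_nn_integral_insert2_rev) measurable
  finally show ?thesis
    unfolding I_def nn_integral_two_records_section[OF assms(1-3)] .
qed

lemma record_pair_ratio_identity:
  fixes x c d j m k :: real
  assumes "0 < j" "0 < m" "j + m = k"
  shows "k * j * (x * c / (k * j) + x / j * ((d - c) / m)) = x / m * (k * d - j * c)"
proof -
  have "0 < k"
    using assms by simp
  with assms(1,2) have "k * j * (x * c / (k * j) + x / j * ((d - c) / m)) = x * c + k * x * (d - c) / m"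
    by (simp add: field_simps)
  also have "\<dots> = x / m * (k * d - j * c)"
    using assms(2) by (simp add: field_simps flip: assms(3))
  finally show ?thesis .
qed

lemma (in prob_space) distr_restrict_iid_eq_PiM:
  assumes "I \<noteq> {}" and "\<And>i. i \<in> I \<Longrightarrow> random_variable N (X i)" and "indep_vars (\<lambda>_. N) X I"
    and "\<And>i. i \<in> I \<Longrightarrow> distr M N (X i) = D"
  shows "distr M (PiM I (\<lambda>_. N)) (\<lambda>w. \<lambda>i\<in>I. X i w) = PiM I (\<lambda>_. D)"
proof -
  have "distr M (PiM I (\<lambda>_. N)) (\<lambda>w. \<lambda>i\<in>I. X i w) = PiM I (\<lambda>i. distr M N (X i))"
    using indep_vars_iff_distr_eq_PiM'[OF assms(1,2)] assms(3) ..
  also have "\<dots> = PiM I (\<lambda>_. D)"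
    using assms(4) by (rule PiM_cong[OF refl])
  finally show ?thesis .
qed

locale iid_continuous_sequence = prob_space M for M :: "'a measure" +
  fixes X :: "nat \<Rightarrow> 'a \<Rightarrow> real"
  assumes random_variable: "\<And>i. 1 \<le> i \<Longrightarrow> X i \<in> borel_measurable M"
    and indep: "indep_vars (\<lambda>_. borel) X {1..}"
    and identically_distributed: "\<And>i. 1 \<le> i \<Longrightarrow> distr M borel (X i) = distr M borel (X 1)"
    and continuous_cdf: "continuous_on UNIV (cdf (distr M borel (X 1)))"
begin

abbreviation law :: "real measure" where "law \<equiv> distr M borel (X 1)"

lemma real_distribution_law: "real_distribution law"
  using random_variable[of 1] by (intro real_distribution_distr) auto

sublocale law: continuous_real_distribution law
  using real_distribution_law continuous_cdf
  by (intro continuous_real_distribution.intro continuous_real_distribution_axioms.intro)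

lemma emeasure_two_records_eq_PiM:
  assumes "1 \<le> j" "j < k" and [measurable]: "A1 \<in> sets borel" "A2 \<in> sets borel"
  shows "emeasure M {w \<in> space M. X j w \<in> A1 \<and> X k w \<in> A2 \<and> is_record X j w \<and> is_record X k w}
    = emeasure (PiM {1..k} (\<lambda>_. law))
      {x \<in> space (PiM {1..k} (\<lambda>_. law)). x j \<in> A1 \<and> x k \<in> A2 \<and>
         (\<forall>i\<in>{1..<j}. x i < x j) \<and> (\<forall>i\<in>{1..<k}. x i < x k)}"
    (is "_ = emeasure _ ?S")
proof -
  let ?V = "\<lambda>w. \<lambda>i\<in>{1..k}. X i w"
  have [measurable]: "j \<in> {1..k}" "k \<in> {1..k}"
    "i \<in> {1..<j} \<Longrightarrow> i \<in> {1..k}" "i \<in> {1..<k} \<Longrightarrow> i \<in> {1..k}" for i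
    using assms(1,2) by auto
  have V_meas: "?V \<in> M \<rightarrow>\<^sub>M PiM {1..k} (\<lambda>_. borel)"
    by (intro measurable_restrict random_variable) simp
  have law_PiM: "distr M (PiM {1..k} (\<lambda>_. borel)) ?V = PiM {1..k} (\<lambda>_. law)"
  proof (rule distr_restrict_iid_eq_PiM)
    show "indep_vars (\<lambda>_. borel) X {1..k}"
      by (rule indep_vars_subset[OF indep]) auto
    show "random_variable borel (X i)" if "i \<in> {1..k}" for i
      using that by (intro random_variable) simp
    show "distr M borel (X i) = law" if "i \<in> {1..k}" for i
      using that by (intro identically_distributed) simp
  qed (use assms(2) in auto)
  have S_meas: "?S \<in> sets (PiM {1..k} (\<lambda>_. borel))"
  proof -
    have "space (PiM {1..k} (\<lambda>_. law)) = space (PiM {1..k} (\<lambda>_. borel))"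
      by (simp add: space_PiM)
    then show ?thesis
      by (simp only:) measurable
  qed
  have "emeasure (PiM {1..k} (\<lambda>_. law)) ?S = emeasure (distr M (PiM {1..k} (\<lambda>_. borel)) ?V) ?S"
    by (simp only: law_PiM)
  also have "\<dots> = emeasure M (?V -` ?S \<inter> space M)"
    by (rule emeasure_distr[OF V_meas S_meas])
  also have "?V -` ?S \<inter> space M
      = {w \<in> space M. X j w \<in> A1 \<and> X k w \<in> A2 \<and> is_record X j w \<and> is_record X k w}"
  proof -
    have "?V w \<in> space (PiM {1..k} (\<lambda>_. law))" if "w \<in> space M" for w
      using measurable_space[OF V_meas that] by (simp add: space_PiM)
    moreover have "(\<forall>i\<in>{1..<m}. ?V w i < ?V w m) \<longleftrightarrow> (\<forall>i\<in>{1..<m}. X i w < X m w)"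
      if "m \<le> k" for m w
      using that by simp
    ultimately show ?thesis
      using assms(1,2) by (auto simp: is_record_def)
  qed
  finally show ?thesis
    by (rule sym)
qed

lemma emeasure_two_records:
  assumes "1 \<le> j" "j < k" and [measurable]: "A1 \<in> sets borel" "A2 \<in> sets borel"
  shows "emeasure M {w \<in> space M. X j w \<in> A1 \<and> X k w \<in> A2 \<and> is_record X j w \<and> is_record X k w}
    = (\<integral>\<^sup>+ v. \<integral>\<^sup>+ u. indicator A1 u * indicator A2 v * indicator {..<v} u *
          ennreal (cdf law u ^ (j - 1)) * ennreal (cdf law v ^ (k - j - 1)) \<partial>law \<partial>law)"
proof -
  have cdf_power: "emeasure law {..<u} ^ n = ennreal (cdf law u ^ n)" for u n
    unfolding law.emeasure_lessThan_eq_cdf by (rule ennreal_power[OF law.cdf_nonneg])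
  note emeasure_two_records_eq_PiM[OF assms]
  also note emeasure_PiM_two_records[OF real_distribution_law assms]
  finally show ?thesis
    by (simp only: cdf_power)
qed

lemma emeasure_two_records_UNIV:
  assumes "1 \<le> j" "j < k" and [measurable]: "A \<in> sets borel"
  shows "emeasure M {w \<in> space M. X j w \<in> UNIV \<and> X k w \<in> A \<and> is_record X j w \<and> is_record X k w}
    = ennreal (1 / j) * (\<integral>\<^sup>+ v. indicator A v * ennreal (cdf law v ^ (k - 1)) \<partial>law)"
proof -
  have indices: "Suc (j - 1) = j" "Suc (j - 1 + (k - j - 1)) = k - 1"
    using assms(1,2) by auto
  have "emeasure M {w \<in> space M. X j w \<in> UNIV \<and> X k w \<in> A \<and> is_record X j w \<and> is_record X k w}
    = (\<integral>\<^sup>+ v. \<integral>\<^sup>+ u. indicator UNIV u * indicator A v * indicator {..<v} u *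
          ennreal (cdf law u ^ (j - 1)) * ennreal (cdf law v ^ (k - j - 1)) \<partial>law \<partial>law)"
    using assms by (intro emeasure_two_records) auto
  also have "\<dots> = ennreal (1 / Suc (j - 1))
      * (\<integral>\<^sup>+ v. indicator A v * ennreal (cdf law v ^ Suc (j - 1 + (k - j - 1))) \<partial>law)"
    using law.nn_integral_record_pair[OF assms(3), of "j - 1" "k - j - 1"]
    by (simp only: indicator_UNIV mult_1)
  finally show ?thesis
    by (simp only: indices)
qed

lemma emeasure_two_records_atMost:
  fixes y1 y2 :: real
  assumes "1 \<le> j" "j < k"
  defines "a \<equiv> cdf law y1" and "b \<equiv> cdf law y2"
  shows "emeasure M {w \<in> space M. X j w \<le> y1 \<and> X k w \<le> y2 \<and> is_record X j w \<and> is_record X k w}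
    = ennreal (1 / real j) * ennreal (min a b ^ k / real k)
      + ennreal (a ^ j / real j) * ennreal ((max a b ^ (k - j) - a ^ (k - j)) / real (k - j))"
proof -
  have indices: "Suc (j - 1) = j" "Suc (k - j - 1) = k - j" "Suc (Suc (j - 1 + (k - j - 1))) = k"
    using assms(1,2) by auto
  have "mono (cdf law)"
    using law.cdf_nondecreasing by (rule monoI)
  then have min_max: "cdf law (min y1 y2) = min a b" "cdf law (max y1 y2) = max a b"
    by (simp_all add: a_def b_def min_of_mono max_of_mono)
  have "emeasure M {w \<in> space M. X j w \<in> {..y1} \<and> X k w \<in> {..y2} \<and> is_record X j w \<and> is_record X k w}
    = (\<integral>\<^sup>+ v. \<integral>\<^sup>+ u. indicator {..y1} u * indicator {..y2} v * indicator {..<v} u *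
          ennreal (cdf law u ^ (j - 1)) * ennreal (cdf law v ^ (k - j - 1)) \<partial>law \<partial>law)"
    using assms(1,2) by (intro emeasure_two_records) auto
  also have "\<dots> = ennreal (1 / real j) * ennreal (min a b ^ k / real k)
      + ennreal (a ^ j / real j) * ennreal ((max a b ^ (k - j) - a ^ (k - j)) / real (k - j))"
    unfolding law.nn_integral_record_pair_atMost indices min_max a_def[symmetric] ..
  finally show ?thesis
    by simp
qed

lemma prob_two_records_atMost:
  fixes y1 y2 :: real
  assumes "1 \<le> j" "j < k"
  defines "a \<equiv> cdf law y1" and "b \<equiv> cdf law y2"
  shows "\<P>(w in M. X j w \<le> y1 \<and> X k w \<le> y2 \<and> is_record X j w \<and> is_record X k w)
    = min a b ^ k / (real k * real j) + a ^ j / real j * ((max a b ^ (k - j) - a ^ (k - j)) / real (k - j))"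
proof (rule measure_eq_emeasure_eq_ennreal)
  have a_b: "0 \<le> a" "a \<le> max a b" "0 \<le> min a b"
    using law.cdf_nonneg by (auto simp: a_def b_def)
  have increment: "0 \<le> (max a b ^ (k - j) - a ^ (k - j)) / real (k - j)"
    using power_mono[OF a_b(2) a_b(1), of "k - j"] by simp
  have summands_nonneg: "0 \<le> min a b ^ k / (real k * real j)"
    "0 \<le> a ^ j / real j * ((max a b ^ (k - j) - a ^ (k - j)) / real (k - j))"
    using a_b increment by (simp, intro mult_nonneg_nonneg) simp_all
  then show "0 \<le> min a b ^ k / (real k * real j) + a ^ j / real j * ((max a b ^ (k - j) - a ^ (k - j)) / real (k - j))"
    by (rule add_nonneg_nonneg)
  have "ennreal (1 / real j) * ennreal (min a b ^ k / real k) = ennreal (min a b ^ k / (real k * real j))"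
    by (subst ennreal_mult[symmetric]) (use a_b in \<open>auto simp: field_simps\<close>)
  moreover have "ennreal (a ^ j / real j) * ennreal ((max a b ^ (k - j) - a ^ (k - j)) / real (k - j))
      = ennreal (a ^ j / real j * ((max a b ^ (k - j) - a ^ (k - j)) / real (k - j)))"
    by (rule ennreal_mult[symmetric]) (use a_b increment in auto)
  ultimately show "emeasure M {w \<in> space M. X j w \<le> y1 \<and> X k w \<le> y2 \<and> is_record X j w \<and> is_record X k w}
      = ennreal (min a b ^ k / (real k * real j) + a ^ j / real j * ((max a b ^ (k - j) - a ^ (k - j)) / real (k - j)))"
    unfolding emeasure_two_records_atMost[OF assms(1,2), of y1 y2, folded a_def b_def]
    by (simp only: ennreal_plus[OF summands_nonneg])
qed

lemma prob_two_records:
  assumes "1 \<le> j" "j < k"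
  shows "\<P>(w in M. is_record X j w \<and> is_record X k w) = 1 / (real k * real j)"
proof -
  have "emeasure M {w \<in> space M. X j w \<in> UNIV \<and> X k w \<in> UNIV \<and> is_record X j w \<and> is_record X k w}
      = ennreal (1 / real j) * ennreal (1 / real k)"
    using emeasure_two_records_UNIV[OF assms, of UNIV] assms law.nn_integral_cdf_power[of "k - 1"]
    by (simp only: indicator_UNIV mult_1) simp
  then show ?thesis
    by (simp add: measure_def ennreal_mult[symmetric] mult.commute)
qed

lemma prob_record_atMost:
  assumes "1 < k"
  shows "\<P>(w in M. X k w \<le> y \<and> is_record X k w) = cdf law y ^ k / k"
proof -
  have "emeasure M {w \<in> space M. X 1 w \<in> UNIV \<and> X k w \<in> {..y} \<and> is_record X 1 w \<and> is_record X k w}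
      = ennreal (cdf law y ^ k / real k)"
    using emeasure_two_records_UNIV[of 1 k "{..y}"] assms law.nn_integral_cdf_power_atMost[of y "k - 1"]
    by simp
  moreover have "{w \<in> space M. X 1 w \<in> UNIV \<and> X k w \<in> {..y} \<and> is_record X 1 w \<and> is_record X k w}
      = {w \<in> space M. X k w \<le> y \<and> is_record X k w}"
    by (auto simp: is_record_def)
  ultimately show ?thesis
    using law.cdf_nonneg[of y] by (simp add: measure_def)
qed

lemma prob_record:
  assumes "1 < k"
  shows "\<P>(w in M. is_record X k w) = 1 / k"
  using prob_two_records[of 1 k] assms by (simp add: is_record_def)


lemma cond_prob_two_records_atMost:
  fixes y1 y2 :: real
  assumes "1 \<le> j" "j < k"
  defines "a \<equiv> cdf law y1" and "b \<equiv> cdf law y2"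
  shows "\<P>(w in M. X j w \<le> y1 \<and> X k w \<le> y2 \<bar> is_record X j w \<and> is_record X k w)
    = (if a < b then a ^ j / real (k - j) * (real k * b ^ (k - j) - real j * a ^ (k - j)) else b ^ k)"
proof -
  have "\<P>(w in M. X j w \<le> y1 \<and> X k w \<le> y2 \<bar> is_record X j w \<and> is_record X k w)
      = real k * real j * (min a b ^ k / (real k * real j)
        + a ^ j / real j * ((max a b ^ (k - j) - a ^ (k - j)) / real (k - j)))"
    unfolding cond_prob_def conj_assoc prob_two_records_atMost[OF assms(1,2)]
      prob_two_records[OF assms(1,2)] a_def b_def
    by simp
  also have "\<dots> = (if a < b then a ^ j / real (k - j) * (real k * b ^ (k - j) - real j * a ^ (k - j)) else b ^ k)"
  proof (cases "a < b")
    case True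
    then have "min a b = a" "max a b = b"
      by simp_all
    moreover have "a ^ k = a ^ j * a ^ (k - j)"
      using assms(2) by (simp add: power_add[symmetric])
    ultimately have "real k * real j * (min a b ^ k / (real k * real j)
          + a ^ j / real j * ((max a b ^ (k - j) - a ^ (k - j)) / real (k - j)))
        = real k * real j * (a ^ j * a ^ (k - j) / (real k * real j)
          + a ^ j / real j * ((b ^ (k - j) - a ^ (k - j)) / real (k - j)))"
      by (simp only:)
    also have "\<dots> = a ^ j / real (k - j) * (real k * b ^ (k - j) - real j * a ^ (k - j))"
      by (rule record_pair_ratio_identity) (use assms(1,2) in auto)
    finally show ?thesis
      by (simp only: if_P[OF True])
  next
    case False
    then show ?thesis
      using assms(1,2) by (simp add: min_def max_def)
  qed
  finally show ?thesis .
qed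

lemma cond_prob_record_atMost:
  assumes "1 < k"
  shows "\<P>(w in M. X k w \<le> y \<bar> is_record X k w) = cdf law y ^ k"
  using assms unfolding cond_prob_def prob_record_atMost[OF assms] prob_record[OF assms]
  by simp
end

theorem corollary3:
  fixes M :: "'a measure" and X :: "nat \<Rightarrow> 'a \<Rightarrow> real" and F :: "real \<Rightarrow> real"
    and j k :: nat and y1 y2 :: real
  assumes "prob_space M"
    and "\<And>i. i \<ge> 1 \<Longrightarrow> X i \<in> borel_measurable M"
    and "prob_space.indep_vars M (\<lambda>_. borel) X {1..}"
    and "\<And>i. i \<ge> 1 \<Longrightarrow> distr M borel (X i) = distr M borel (X 1)"
    and F_def: "F = cdf (distr M borel (X 1))"
    and "continuous_on UNIV F"
    and "1 \<le> j" and "j < k"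
  shows "(F y1 < F y2 \<longrightarrow>
           \<P>(w in M. X j w \<le> y1 \<and> X k w \<le> y2 \<bar> is_record X j w \<and> is_record X k w)
             = F y1 ^ j / real (k - j) * (real k * F y2 ^ (k - j) - real j * F y1 ^ (k - j)))
       \<and> (F y2 \<le> F y1 \<longrightarrow>
           \<P>(w in M. X j w \<le> y1 \<and> X k w \<le> y2 \<bar> is_record X j w \<and> is_record X k w)
             = F y2 ^ k
           \<and> F y2 ^ k = \<P>(w in M. X k w \<le> y2 \<bar> is_record X k w))"
proof -
  have "continuous_on UNIV (cdf (distr M borel (X 1)))"
    using assms(6) unfolding F_def .
  with assms(1-4) interpret iid_continuous_sequence M X
    by (intro iid_continuous_sequence.intro iid_continuous_sequence_axioms.intro)
  have "1 < k"
    using assms(7,8) by simp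
  show ?thesis
    using cond_prob_two_records_atMost[OF assms(7,8), of y1 y2] cond_prob_record_atMost[OF \<open>1 < k\<close>, of y2]
    unfolding F_def by auto
qed

end
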